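(* Let $0 < \alpha < 1$ and $\omega\in \Omega$. The random variable defined by \begin{equation*} R_{\mathrm{hk}}(\omega, \alpha) \stackrel{\mathrm{def}}{=} \inf \left\{ \begin{array}{l} R_0 \geq 1\,:\,\mbox{for all $R\geq R_0$, $q_t^\omega(x,y)$ satisfies the two-sided Gaussian bound}\\ c_{\text{hk}1} t^{-d/2} \exp\left(-c_{\text{hk}2} \frac{|x-y|_1^2}{t}\right) \leq q_t^\omega(x,y) \leq c_{\text{hk}3} t^{-d/2} \exp\left(-c_{\text{hk}4} \frac{|x-y|_1^2}{t}\right)\\ \mbox{for all $x\in \mathcal{S}_\infty \cap B(0,2r_{\alpha, R})$, $y\in \mathcal{S}_\infty$, and $t\geq R \vee |x-y|^{3/2}_1$} \end{array} \right\} \end{equation*} (with $\inf \varnothing =\infty$) satisfies, for all $n \in \mathbb{Z}_+$, \begin{equation*} \mathbb{P}^u \left[R_{\mathrm{hk}}(\,\cdot\,, \alpha)\geq n \right] \leq C(\alpha) e^{-c(\alpha) (\log n)^{1+\Delta_{\mathrm{S}}}}. \end{equation*} In particular, $R_{\mathrm{hk}}(\,\cdot\,, \alpha)$ is $\mathbb{P}^u$-a.s. finite.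
   Context: Setting: $d\geq 2$; a family of probability measures $\{\mathbb{P}^u : u\in(a,b)\}$ on $\Omega=\{0,1\}^{\mathbb{Z}^d}$ (site percolation, sites with $\omega(x)=1$ open) satisfying ergodicity under lattice shifts, monotonicity in $u$, a sprinkled decoupling inequality, local uniqueness of the infinite cluster in boxes with failure probability at most $e^{-f_{\mathrm{S}}(u,R)}$ where $f_{\mathrm{S}}(u,R)\geq(\log R)^{1+\Delta_{\mathrm{S}}}$ for $R$ large (this defines $\Delta_{\mathrm{S}}=\Delta_{\mathrm{S}}(u)>0$), and continuity and positivity of the density $\eta(u)=\mathbb{P}^u[0\in\mathcal{S}_\infty]$. $\mathcal{S}_\infty$ is the (a.s. unique) infinite open cluster; $X$ is the continuous-time constant-speed simple random walk on $\mathcal{S}_\infty$ with law $P^\omega_x$, edge weights $\mu_{\{x,y\}}=1$ on edges of $\mathcal{S}_\infty$, $\mu_x=\sum_y\mu_{\{x,y\}}$, and heat kernel $q^\omega_t(x,y)=P^\omega_x[X_t=y]/\mu_y$. $B(x,r)$ is the closed sup-norm ball in $\mathbb{Z}^d$. Known input (from Alves–Sapozhnikov / Sapozhnikov, with $\varepsilon=1/2$): there are random variables $\mathcal{T}(x,\omega)$ and constants $c_{\text{hk}1},\dots,c_{\text{hk}6}>0$ such that for $\mathbb{P}^u$-a.e. $\omega$ and $x\in\mathcal{S}_\infty$, $\mathcal{T}(x,\omega)<\infty$ and the two-sided Gaussian bound above holds for $y\in\mathcal{S}_\infty$, $t\geq \mathcal{T}(x,\omega)\vee|x-y|_1^{3/2}$;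 moreover $\mathbb{P}^u[\mathcal{T}(z,\cdot)\geq r]\leq c_{\text{hk}5}e^{-c_{\text{hk}6}(\log r)^{1+\Delta_{\mathrm{S}}}}$ for all $z\in\mathbb{Z}^d$, $r\geq1$. Also $r_{\alpha,R}=\exp(\kappa_{\mathrm{reg}}(\alpha)(\log R)^{1+\Delta_{\mathrm{S}}})$ with $\kappa_{\mathrm{reg}}(\alpha)=\frac{1}{2d}(\kappa_{\mathrm{d}2}(\alpha)\wedge c_{\text{hk}6})$, where $\kappa_{\mathrm{d}2}(\alpha)>0$ is the exponent constant in the volume large deviation bound $\mathbb{P}^u[\,|\mathcal{S}_\infty\cap B(0,R)|/|B(0,R)|\notin[(1-\alpha)\eta(u),(1+\alpha)\eta(u)] \mid 0\in\mathcal{S}_\infty]\leq \kappa_{\mathrm{d}1}(\alpha)e^{-\kappa_{\mathrm{d}2}(\alpha)(\log R)^{1+\Delta_{\mathrm{S}}}}$. *)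

theory Defs
  imports "HOL-Probability.Probability"
begin

text \<open>Sites of Z^d are int ^ 'd; configurations omega : Z^d -> bool (True = open).\<close>

definition l1dist :: "int ^ 'd \<Rightarrow> int ^ 'd \<Rightarrow> real" where
  "l1dist x y = (\<Sum>i\<in>UNIV. real_of_int \<bar>x $ i - y $ i\<bar>)"

definition supball0 :: "real \<Rightarrow> (int ^ 'd) set" where
  "supball0 r = {x. \<forall>i. real_of_int \<bar>x $ i\<bar> \<le> r}"

definition open_edges :: "(int ^ 'd \<Rightarrow> bool) \<Rightarrow> ((int ^ 'd) \<times> (int ^ 'd)) set" where
  "open_edges \<omega> = {(x, y). \<omega> x \<and> \<omega> y \<and> l1dist x y = 1}"

definition open_cluster :: "(int ^ 'd \<Rightarrow> bool) \<Rightarrow> int ^ 'd \<Rightarrow> (int ^ 'd) set" where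
  "open_cluster \<omega> x = {y. (x, y) \<in> (open_edges \<omega>)\<^sup>*}"

text \<open>The infinite open cluster (union of all infinite open clusters; a.s. unique).\<close>
definition S_inf :: "(int ^ 'd \<Rightarrow> bool) \<Rightarrow> (int ^ 'd) set" where
  "S_inf \<omega> = {x. \<omega> x \<and> infinite (open_cluster \<omega> x)}"

definition nbrs :: "(int ^ 'd \<Rightarrow> bool) \<Rightarrow> int ^ 'd \<Rightarrow> (int ^ 'd) set" where
  "nbrs \<omega> x = {y \<in> S_inf \<omega>. l1dist x y = 1}"

definition mu :: "(int ^ 'd \<Rightarrow> bool) \<Rightarrow> int ^ 'd \<Rightarrow> real" where
  "mu \<omega> x = real (card (nbrs \<omega> x))"

fun jump_prob :: "(int ^ 'd \<Rightarrow> bool) \<Rightarrow> nat \<Rightarrow> int ^ 'd \<Rightarrow> int ^ 'd \<Rightarrow> real" where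
  "jump_prob \<omega> 0 x y = (if x = y then 1 else 0)"
| "jump_prob \<omega> (Suc n) x y = (\<Sum>z\<in>nbrs \<omega> x. jump_prob \<omega> n z y / mu \<omega> x)"

text \<open>P^omega_x[X_t = y] for the constant-speed random walk (rate-1 Poisson clock).\<close>
definition trans_prob :: "(int ^ 'd \<Rightarrow> bool) \<Rightarrow> real \<Rightarrow> int ^ 'd \<Rightarrow> int ^ 'd \<Rightarrow> real" where
  "trans_prob \<omega> t x y = (\<Sum>n. exp (- t) * t ^ n / fact n * jump_prob \<omega> n x y)"

definition heat_kernel :: "(int ^ 'd \<Rightarrow> bool) \<Rightarrow> real \<Rightarrow> int ^ 'd \<Rightarrow> int ^ 'd \<Rightarrow> real" where
  "heat_kernel \<omega> t x y = trans_prob \<omega> t x y / mu \<omega> y"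

definition gauss_bound ::
  "real \<Rightarrow> real \<Rightarrow> real \<Rightarrow> real \<Rightarrow> (int ^ 'd \<Rightarrow> bool) \<Rightarrow> real \<Rightarrow> int ^ 'd \<Rightarrow> int ^ 'd \<Rightarrow> bool" where
  "gauss_bound c1 c2 c3 c4 \<omega> t x y \<longleftrightarrow>
     c1 * t powr (- real CARD('d) / 2) * exp (- c2 * (l1dist x y)\<^sup>2 / t) \<le> heat_kernel \<omega> t x y \<and>
     heat_kernel \<omega> t x y \<le> c3 * t powr (- real CARD('d) / 2) * exp (- c4 * (l1dist x y)\<^sup>2 / t)"

definition r_reg :: "'d itself \<Rightarrow> real \<Rightarrow> real \<Rightarrow> real \<Rightarrow> real \<Rightarrow> real" where
  "r_reg _ kd2 c6 \<Delta> R = exp (min kd2 c6 / (2 * real CARD('d)) * (ln R) powr (1 + \<Delta>))"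

text \<open>R_hk(omega, alpha), with inf of the empty set = infinity. kd2 is kappa_d2(alpha).\<close>
definition R_hk ::
  "real \<Rightarrow> real \<Rightarrow> real \<Rightarrow> real \<Rightarrow> real \<Rightarrow> real \<Rightarrow> real \<Rightarrow> (int ^ 'd \<Rightarrow> bool) \<Rightarrow> ereal" where
  "R_hk c1 c2 c3 c4 c6 kd2 \<Delta> \<omega> = Inf (ereal ` {R0. R0 \<ge> 1 \<and>
     (\<forall>R \<ge> R0. \<forall>x \<in> S_inf \<omega> \<inter> supball0 (2 * r_reg TYPE('d) kd2 c6 \<Delta> R).
        \<forall>y \<in> S_inf \<omega>. \<forall>t. t \<ge> max R (l1dist x y powr (3/2)) \<longrightarrow>
          gauss_bound c1 c2 c3 c4 \<omega> t x y)})"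

end

theory Submission
  imports Defs "HOL-Real_Asymp.Real_Asymp"
begin

(* R_hk(omega) <= K as soon as, at every scale k >= K, every x in the ball B(0, 2 r_{alpha,k+1})
   has T(x, omega) < k: for R in [k, k+1) the ball B(0, 2 r_{alpha,R}) lies inside it and
   t >= R >= k > T(x, omega). By a union bound over that ball and the tail of T, scale k fails
   with probability at most (5 r_{alpha,k+1})^d c5 exp(-c6 (log k)^(1+Delta)). Since
   kappa_reg <= c6/(2d), the volume factor is only exp((c6/2) (log (k+1))^(1+Delta)), which is
   eventually below exp((3/4) c6 (log k)^(1+Delta)); the remaining exp(-(c6/4) (log k)^(1+Delta))
   is summable, and summing over k >= n - 1 bounds P[R_hk >= n]. Letting n tend to infinity
   gives almost sure finiteness. *)

lemma eventually_ln_Suc_powr_le: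
  fixes p q :: real
  assumes "0 < p" "1 < q"
  shows "eventually (\<lambda>k. (ln (real k + 1)) powr p \<le> q * (ln (real k)) powr p) sequentially"
proof -
  have "((\<lambda>x::real. ln (x + 1) / ln x) \<longlongrightarrow> 1) at_top"
    by real_asymp
  then have "((\<lambda>x. (ln (x + 1) / ln x) powr p) \<longlongrightarrow> 1 powr p) at_top"
    by (rule tendsto_powr) auto
  then have "eventually (\<lambda>x. (ln (x + 1) / ln x) powr p < q) at_top"
    using assms by (intro order_tendstoD) auto
  moreover have "eventually (\<lambda>x::real. 1 < x) at_top"
    by (rule eventually_gt_at_top)
  ultimately have "eventually (\<lambda>x. (ln (x + 1)) powr p \<le> q * (ln x) powr p) at_top"
    by eventually_elim (auto simp: powr_divide divide_simps)
  then show ?thesis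
    by (rule eventually_compose_filterlim[OF _ filterlim_real_sequentially])
qed

lemma summable_exp_neg_ln_powr:
  fixes a p :: real
  assumes "0 < a" "1 < p"
  shows "summable (\<lambda>k::nat. exp (- a * (ln (real k)) powr p))"
proof (rule summable_comparison_test_ev)
  show "summable (\<lambda>k::nat. real k powr (- 2))"
    by (simp add: summable_real_powr_iff)
  have "filterlim (\<lambda>x::real. (ln x) powr (p - 1)) at_top at_top"
    using assms by (intro filterlim_compose[OF real_powr_at_top ln_at_top]) auto
  then have "eventually (\<lambda>x::real. 2 / a \<le> (ln x) powr (p - 1) \<and> 1 < x) at_top"
    by (intro eventually_conj eventually_gt_at_top) (simp add: filterlim_at_top)
  then have "eventually (\<lambda>k::nat. 2 / a \<le> (ln (real k)) powr (p - 1) \<and> 1 < real k) sequentially"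
    by (rule eventually_compose_filterlim[OF _ filterlim_real_sequentially])
  then show "eventually (\<lambda>k. norm (exp (- a * (ln (real k)) powr p)) \<le> real k powr (- 2)) sequentially"
  proof eventually_elim
    case (elim k)
    then have ln_pos: "0 < ln (real k)" by simp
    have "2 * ln (real k) \<le> a * (ln (real k) * (ln (real k)) powr (p - 1))"
      using elim ln_pos assms by (simp add: field_simps mult_left_mono)
    also have "ln (real k) * (ln (real k)) powr (p - 1) = (ln (real k)) powr p"
      using ln_pos by (simp add: powr_mult_base)
    finally show ?case
      using elim by (simp add: powr_def)
  qed
qed

lemma suminf_exp_neg_ln_powr_shift_le:
  fixes a p :: real and K :: nat
  assumes "0 < a" "1 < p" "1 \<le> K"
  shows "summable (\<lambda>i. exp (- a * (ln (real (i + K))) powr p))"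
    and "(\<Sum>i. exp (- a * (ln (real (i + K))) powr p))
           \<le> (\<Sum>k. exp (- (a / 2) * (ln (real k)) powr p)) * exp (- (a / 2) * (ln (real K)) powr p)"
proof -
  define f where "f b k = exp (- b * (ln (real k)) powr p)" for b k
  have f_anti: "f b k \<le> f b j" if "0 \<le> b" "j \<le> k" for b j k
  proof -
    have "(ln (real j)) powr p \<le> (ln (real k)) powr p"
      using that assms by (cases "j = 0") (auto intro!: powr_mono2)
    then show ?thesis
      using that by (simp add: f_def mult_left_mono)
  qed
  have split: "f a (i + K) \<le> f (a / 2) i * f (a / 2) K" for i
  proof -
    have "f a (i + K) = f (a / 2) (i + K) * f (a / 2) (i + K)"
      by (simp add: f_def flip: exp_add)
    also have "\<dots> \<le> f (a / 2) i * f (a / 2) K"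
      using assms by (intro mult_mono f_anti) (auto simp: f_def)
    finally show ?thesis .
  qed
  have summable: "summable (f (a / 2))"
    unfolding f_def using assms by (intro summable_exp_neg_ln_powr) auto
  then have summable_bound: "summable (\<lambda>i. f (a / 2) i * f (a / 2) K)"
    by (rule summable_mult2)
  show shift_summable: "summable (\<lambda>i. exp (- a * (ln (real (i + K))) powr p))"
    using split by (intro summable_comparison_test'[OF summable_bound]) (auto simp: f_def)
  have "(\<Sum>i. f a (i + K)) \<le> (\<Sum>i. f (a / 2) i * f (a / 2) K)"
    using shift_summable summable_bound split by (intro suminf_le) (auto simp: f_def)
  also have "\<dots> = (\<Sum>k. f (a / 2) k) * f (a / 2) K"
    using summable by (rule suminf_mult2[symmetric])
  finally show "(\<Sum>i. exp (- a * (ln (real (i + K))) powr p))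
           \<le> (\<Sum>k. exp (- (a / 2) * (ln (real k)) powr p)) * exp (- (a / 2) * (ln (real K)) powr p)"
    by (simp add: f_def)
qed

lemma supball0_mono: "\<rho> \<le> \<rho>' \<Longrightarrow> supball0 \<rho> \<subseteq> supball0 \<rho>'"
  unfolding supball0_def by (auto intro: order_trans)

lemma supball0_subset_box:
  "supball0 \<rho> \<subseteq> vec_lambda ` PiE UNIV (\<lambda>_::'d::finite. {- \<lfloor>\<rho>\<rfloor> .. \<lfloor>\<rho>\<rfloor>})"
proof
  fix x :: "int ^ 'd"
  assume "x \<in> supball0 \<rho>"
  then have "\<forall>i. \<bar>x $ i\<bar> \<le> \<lfloor>\<rho>\<rfloor>"
    by (simp add: supball0_def le_floor_iff)
  then have "vec_nth x \<in> PiE UNIV (\<lambda>_. {- \<lfloor>\<rho>\<rfloor> .. \<lfloor>\<rho>\<rfloor>})"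
    by (auto simp: abs_le_iff minus_le_iff)
  then show "x \<in> vec_lambda ` PiE UNIV (\<lambda>_. {- \<lfloor>\<rho>\<rfloor> .. \<lfloor>\<rho>\<rfloor>})"
    by (rule image_eqI[rotated]) simp
qed

lemma finite_supball0: "finite (supball0 \<rho> :: (int ^ 'd) set)"
  by (rule finite_subset[OF supball0_subset_box]) (intro finite_imageI finite_PiE; simp)

lemma card_supball0_le:
  assumes "0 \<le> \<rho>"
  shows "real (card (supball0 \<rho> :: (int ^ 'd) set)) \<le> (2 * \<rho> + 1) ^ CARD('d)"
proof -
  define m where "m = \<lfloor>\<rho>\<rfloor>"
  have "card (supball0 \<rho> :: (int ^ 'd) set) \<le> card (vec_lambda ` PiE UNIV (\<lambda>_::'d::finite. {- m .. m}))"
    unfolding m_def by (intro card_mono supball0_subset_box finite_imageI finite_PiE) auto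
  also have "\<dots> \<le> card (PiE UNIV (\<lambda>_::'d::finite. {- m .. m}))"
    by (intro card_image_le finite_PiE) auto
  also have "\<dots> = nat (2 * m + 1) ^ CARD('d)"
    by (simp add: card_PiE)
  finally have "real (card (supball0 \<rho> :: (int ^ 'd) set)) \<le> real (nat (2 * m + 1) ^ CARD('d))"
    by (simp only: of_nat_le_iff)
  also have "\<dots> = real_of_int (2 * m + 1) ^ CARD('d)"
    using assms by (simp add: m_def)
  also have "\<dots> \<le> (2 * \<rho> + 1) ^ CARD('d)"
    using assms by (intro power_mono) (auto simp: m_def)
  finally show ?thesis .
qed

lemma one_le_r_reg: "0 \<le> kd2 \<Longrightarrow> 0 \<le> c6 \<Longrightarrow> 1 \<le> r_reg TYPE('d) kd2 c6 \<Delta> R"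
  by (simp add: r_reg_def)

lemma r_reg_mono:
  assumes "0 \<le> kd2" "0 \<le> c6" "0 \<le> 1 + \<Delta>" "1 \<le> R" "R \<le> R'"
  shows "r_reg TYPE('d) kd2 c6 \<Delta> R \<le> r_reg TYPE('d) kd2 c6 \<Delta> R'"
proof -
  have "(ln R) powr (1 + \<Delta>) \<le> (ln R') powr (1 + \<Delta>)"
    using assms by (intro powr_mono2) auto
  then have "min kd2 c6 / (2 * real CARD('d)) * (ln R) powr (1 + \<Delta>)
               \<le> min kd2 c6 / (2 * real CARD('d)) * (ln R') powr (1 + \<Delta>)"
    using assms by (intro mult_left_mono) auto
  then show ?thesis
    by (simp only: r_reg_def exp_le_cancel_iff)
qed

lemma r_reg_power_card_le:
  shows "r_reg TYPE('d::finite) kd2 c6 \<Delta> R ^ CARD('d) \<le> exp (c6 / 2 * (ln R) powr (1 + \<Delta>))"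
proof -
  have "r_reg TYPE('d) kd2 c6 \<Delta> R ^ CARD('d) = exp (min kd2 c6 / 2 * (ln R) powr (1 + \<Delta>))"
    by (simp add: r_reg_def flip: exp_of_nat_mult)
  also have "\<dots> \<le> exp (c6 / 2 * (ln R) powr (1 + \<Delta>))"
    by (simp add: mult_right_mono)
  finally show ?thesis .
qed

definition exceed_in_ball :: "'a measure \<Rightarrow> (int ^ 'd \<Rightarrow> 'a \<Rightarrow> ereal) \<Rightarrow> real \<Rightarrow> real \<Rightarrow> 'a set" where
  "exceed_in_ball P T \<rho> s = {\<omega> \<in> space P. \<exists>x \<in> supball0 \<rho>. ereal s \<le> T x \<omega>}"

lemma exceed_in_ball_UN:
  "exceed_in_ball P T \<rho> s = (\<Union>x \<in> supball0 \<rho>. {\<omega> \<in> space P. ereal s \<le> T x \<omega>})"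
  by (auto simp: exceed_in_ball_def)

lemma sets_exceed_in_ball:
  assumes "\<And>z. T z \<in> borel_measurable P"
  shows "exceed_in_ball P T \<rho> s \<in> sets P"
  unfolding exceed_in_ball_UN using assms
  by (intro sets.finite_UN finite_supball0) measurable

lemma measure_exceed_in_ball_le:
  fixes T :: "int ^ 'd::finite \<Rightarrow> 'a \<Rightarrow> ereal"
  assumes "\<And>z. T z \<in> borel_measurable P"
    and tail: "\<And>z. measure P {\<omega> \<in> space P. ereal s \<le> T z \<omega>} \<le> b"
    and "0 \<le> \<rho>"
  shows "measure P (exceed_in_ball P T \<rho> s) \<le> (2 * \<rho> + 1) ^ CARD('d) * b"
proof -
  have "0 \<le> b"
    using measure_nonneg tail[of 0] by (rule order_trans)
  have "measure P (exceed_in_ball P T \<rho> s)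
          \<le> (\<Sum>x \<in> supball0 \<rho>. measure P {\<omega> \<in> space P. ereal s \<le> T x \<omega>})"
    unfolding exceed_in_ball_UN using assms(1)
    by (intro measure_UNION_le finite_supball0) measurable
  also have "\<dots> \<le> real (card (supball0 \<rho> :: (int ^ 'd) set)) * b"
    by (intro sum_bounded_above tail)
  also have "\<dots> \<le> (2 * \<rho> + 1) ^ CARD('d) * b"
    using \<open>0 \<le> b\<close> \<open>0 \<le> \<rho>\<close> by (intro mult_right_mono card_supball0_le)
  finally show ?thesis .
qed

(* The events {R_hk >= n} need not be measurable, so their probabilities are bounded through
   measurable supersets. *)
definition outer_measure_le :: "'a measure \<Rightarrow> 'a set \<Rightarrow> real \<Rightarrow> bool" where
  "outer_measure_le M E b \<longleftrightarrow> (\<exists>A \<in> sets M. E \<subseteq> A \<and> measure M A \<le> b)"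

lemma outer_measure_le_mono:
  "outer_measure_le M E' b \<Longrightarrow> E \<subseteq> E' \<Longrightarrow> b \<le> b' \<Longrightarrow> outer_measure_le M E b'"
  unfolding outer_measure_le_def by (meson order_trans)

lemma (in prob_space) outer_measure_le_one:
  "E \<subseteq> space M \<Longrightarrow> 1 \<le> b \<Longrightarrow> outer_measure_le M E b"
  unfolding outer_measure_le_def by (intro bexI[of _ "space M"]) (auto simp: prob_space)

lemma (in prob_space) outer_measure_le_all_if_eventually:
  assumes "eventually (\<lambda>n. outer_measure_le M (E n) (C * exp (- c * (ln (real n)) powr p))) sequentially"
    and "\<And>n. E n \<subseteq> space M" "0 < C" "0 \<le> c" "0 \<le> p"
  shows "\<exists>C' > 0. \<forall>n \<ge> 1. outer_measure_le M (E n) (C' * exp (- c * (ln (real n)) powr p))"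
proof -
  obtain N where N: "\<And>n. N \<le> n \<Longrightarrow> outer_measure_le M (E n) (C * exp (- c * (ln (real n)) powr p))"
    using assms(1) by (auto simp: eventually_sequentially)
  define C' where "C' = max C (exp (c * (ln (real N)) powr p))"
  have "outer_measure_le M (E n) (C' * exp (- c * (ln (real n)) powr p))" if "1 \<le> n" for n
  proof (cases "N \<le> n")
    case True
    then show ?thesis
      by (rule outer_measure_le_mono[OF N]) (auto simp: C'_def intro: mult_right_mono)
  next
    case False
    then have "(ln (real n)) powr p \<le> (ln (real N)) powr p"
      using that \<open>0 \<le> p\<close> by (intro powr_mono2) auto
    then have "1 \<le> exp (c * (ln (real N)) powr p) * exp (- c * (ln (real n)) powr p)"
      using \<open>0 \<le> c\<close> by (simp add: mult_left_mono flip: exp_add)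
    also have "\<dots> \<le> C' * exp (- c * (ln (real n)) powr p)"
      by (intro mult_right_mono) (auto simp: C'_def)
    finally show ?thesis
      using assms(2) by (rule outer_measure_le_one[rotated])
  qed
  moreover have "0 < C'"
    using \<open>0 < C\<close> by (simp add: C'_def)
  ultimately show ?thesis
    by blast
qed

lemma (in finite_measure) AE_less_infinity_if_outer_measure_tail:
  fixes X :: "'a \<Rightarrow> ereal"
  assumes cover: "\<And>n. 1 \<le> n \<Longrightarrow> outer_measure_le M {\<omega> \<in> space M. ereal (real n) \<le> X \<omega>} (b n)"
    and "b \<longlonglongrightarrow> 0"
  shows "AE \<omega> in M. X \<omega> < \<infinity>"
proof -
  define E where "E n = {\<omega> \<in> space M. ereal (real (Suc n)) \<le> X \<omega>}" for n
  have "\<forall>n. \<exists>A. A \<in> sets M \<and> E n \<subseteq> A \<and> measure M A \<le> b (Suc n)"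
  proof
    fix n
    show "\<exists>A. A \<in> sets M \<and> E n \<subseteq> A \<and> measure M A \<le> b (Suc n)"
      using cover[of "Suc n"] by (simp add: outer_measure_le_def E_def Bex_def)
  qed
  then obtain A where A: "\<forall>n. A n \<in> sets M \<and> E n \<subseteq> A n \<and> measure M (A n) \<le> b (Suc n)"
    by (rule choice[THEN exE])
  have sets_INT: "(\<Inter>n. A n) \<in> sets M"
    using A by auto
  have "measure M (\<Inter>n. A n) \<le> b (Suc n)" for n
  proof -
    have "measure M (\<Inter>n. A n) \<le> measure M (A n)"
      using A by (intro finite_measure_mono) auto
    also have "\<dots> \<le> b (Suc n)"
      using A by blast
    finally show ?thesis .
  qed
  then have "measure M (\<Inter>n. A n) = 0"
    using LIMSEQ_Suc[OF assms(2)] by (intro antisym measure_nonneg LIMSEQ_le_const) auto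
  then have "(\<Inter>n. A n) \<in> null_sets M"
    using sets_INT by (simp add: null_sets_def emeasure_eq_measure)
  moreover have "{\<omega> \<in> space M. \<not> X \<omega> < \<infinity>} \<subseteq> (\<Inter>n. A n)"
  proof (intro subsetI INT_I)
    fix \<omega> n
    assume "\<omega> \<in> {\<omega> \<in> space M. \<not> X \<omega> < \<infinity>}"
    then have "\<omega> \<in> E n"
      by (simp add: E_def not_less)
    then show "\<omega> \<in> A n"
      using A by blast
  qed
  ultimately show ?thesis
    by (rule AE_I')
qed

lemma R_hk_le_if_T_small:
  fixes \<omega> :: "int ^ 'd \<Rightarrow> bool" and T :: "int ^ 'd \<Rightarrow> (int ^ 'd \<Rightarrow> bool) \<Rightarrow> ereal"
  assumes gauss: "\<forall>x \<in> S_inf \<omega>. \<forall>y \<in> S_inf \<omega>. \<forall>t. T x \<omega> \<le> ereal t \<and> l1dist x y powr (3/2) \<le> t \<longrightarrow>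
                    gauss_bound c1 c2 c3 c4 \<omega> t x y"
    and "0 \<le> kd2" "0 \<le> c6" "0 \<le> 1 + \<Delta>" "1 \<le> K"
    and small: "\<And>k x. K \<le> k \<Longrightarrow> x \<in> supball0 (2 * r_reg TYPE('d) kd2 c6 \<Delta> (real k + 1)) \<Longrightarrow>
                  T x \<omega> < ereal (real k)"
  shows "R_hk c1 c2 c3 c4 c6 kd2 \<Delta> \<omega> \<le> ereal (real K)"
  unfolding R_hk_def
proof (rule Inf_lower, rule imageI, intro CollectI conjI allI impI ballI)
  show "1 \<le> real K"
    using \<open>1 \<le> K\<close> by simp
  fix R t and x y :: "int ^ 'd"
  assume R: "real K \<le> R" and x: "x \<in> S_inf \<omega> \<inter> supball0 (2 * r_reg TYPE('d) kd2 c6 \<Delta> R)"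
    and y: "y \<in> S_inf \<omega>" and t: "max R (l1dist x y powr (3/2)) \<le> t"
  define k where "k = nat \<lfloor>R\<rfloor>"
  have k: "K \<le> k" "real k \<le> R" "R \<le> real k + 1"
    using R \<open>1 \<le> K\<close> by (auto simp: k_def le_nat_floor)
  then have "r_reg TYPE('d) kd2 c6 \<Delta> R \<le> r_reg TYPE('d) kd2 c6 \<Delta> (real k + 1)"
    using R assms by (intro r_reg_mono) auto
  then have "supball0 (2 * r_reg TYPE('d) kd2 c6 \<Delta> R) \<subseteq> supball0 (2 * r_reg TYPE('d) kd2 c6 \<Delta> (real k + 1))"
    by (intro supball0_mono) simp
  then have "T x \<omega> < ereal (real k)"
    using x by (intro small[OF \<open>K \<le> k\<close>]) blast
  moreover have "real k \<le> t"
    using k t by simp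
  ultimately have "T x \<omega> \<le> ereal t"
    by (metis ereal_less_eq(3) less_imp_le order_trans)
  then show "gauss_bound c1 c2 c3 c4 \<omega> t x y"
    using gauss x y t by auto
qed

lemma eventually_measure_exceed_in_ball_le:
  fixes T :: "int ^ 'd::finite \<Rightarrow> 'a \<Rightarrow> ereal"
  assumes T_meas: "\<And>z. T z \<in> borel_measurable P"
    and T_tail: "\<And>z r. 1 \<le> r \<Longrightarrow>
                   measure P {\<omega> \<in> space P. ereal r \<le> T z \<omega>} \<le> c5 * exp (- c6 * (ln r) powr (1 + \<Delta>))"
    and "0 \<le> c5" "0 < c6" "0 < \<Delta>" "0 \<le> kd2"
  shows "eventually (\<lambda>k. measure P (exceed_in_ball P T (2 * r_reg TYPE('d) kd2 c6 \<Delta> (real k + 1)) (real k))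
           \<le> 5 ^ CARD('d) * c5 * exp (- (c6 / 4) * (ln (real k)) powr (1 + \<Delta>))) sequentially"
proof -
  have "eventually (\<lambda>k. (ln (real k + 1)) powr (1 + \<Delta>) \<le> 3 / 2 * (ln (real k)) powr (1 + \<Delta>)) sequentially"
    using \<open>0 < \<Delta>\<close> by (intro eventually_ln_Suc_powr_le) auto
  with eventually_ge_at_top[of "1::nat"] show ?thesis
  proof eventually_elim
    case (elim k)
    define \<rho> where "\<rho> = r_reg TYPE('d) kd2 c6 \<Delta> (real k + 1)"
    define L where "L = (ln (real k)) powr (1 + \<Delta>)"
    have "1 \<le> \<rho>"
      unfolding \<rho>_def using assms by (intro one_le_r_reg) auto
    have "(2 * (2 * \<rho>) + 1) ^ CARD('d) \<le> (5 * \<rho>) ^ CARD('d)"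
      using \<open>1 \<le> \<rho>\<close> by (intro power_mono) auto
    also have "\<dots> \<le> 5 ^ CARD('d) * exp (c6 / 2 * (ln (real k + 1)) powr (1 + \<Delta>))"
      unfolding power_mult_distrib \<rho>_def by (intro mult_left_mono r_reg_power_card_le) auto
    also have "\<dots> \<le> 5 ^ CARD('d) * exp (3 / 4 * c6 * L)"
      using elim \<open>0 < c6\<close> by (simp add: L_def)
    finally have volume: "(2 * (2 * \<rho>) + 1) ^ CARD('d) \<le> 5 ^ CARD('d) * exp (3 / 4 * c6 * L)" .
    have "measure P (exceed_in_ball P T (2 * \<rho>) (real k))
            \<le> (2 * (2 * \<rho>) + 1) ^ CARD('d) * (c5 * exp (- c6 * L))"
      using \<open>1 \<le> \<rho>\<close> T_tail[of "real k"] elim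
      by (intro measure_exceed_in_ball_le T_meas) (auto simp: L_def)
    also have "\<dots> \<le> 5 ^ CARD('d) * exp (3 / 4 * c6 * L) * (c5 * exp (- c6 * L))"
      using volume \<open>0 \<le> c5\<close> by (intro mult_right_mono) auto
    also have "\<dots> = 5 ^ CARD('d) * c5 * exp (- (c6 / 4) * L)"
      by (simp add: mult_ac flip: exp_add)
    finally show ?case
      by (simp add: \<rho>_def L_def)
  qed
qed

lemma (in finite_measure) measure_UN_atLeast_le:
  fixes B :: "nat \<Rightarrow> 'a set"
  assumes "\<And>k. B k \<in> sets M"
    and bound: "\<And>k. K \<le> k \<Longrightarrow> measure M (B k) \<le> D * exp (- a * (ln (real k)) powr p)"
    and "0 \<le> D" "0 < a" "1 < p" "1 \<le> K"
  shows "measure M (\<Union>k \<in> {K..}. B k)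
           \<le> D * (\<Sum>k. exp (- (a / 2) * (ln (real k)) powr p)) * exp (- (a / 2) * (ln (real K)) powr p)"
proof -
  have shift_bound: "measure M (B (i + K)) \<le> D * exp (- a * (ln (real (i + K))) powr p)" for i
    by (rule bound) simp
  have summable: "summable (\<lambda>i. D * exp (- a * (ln (real (i + K))) powr p))"
    using assms by (intro summable_mult suminf_exp_neg_ln_powr_shift_le(1))
  have "{K..} = range (\<lambda>i. i + K)"
    using image_add_atLeast[of K 0] by (simp add: add.commute)
  have summable_measure: "summable (\<lambda>i. measure M (B (i + K)))"
    by (rule summable_comparison_test'[OF summable, where N = 0]) (use shift_bound in simp)
  have "measure M (\<Union>k \<in> {K..}. B k) = measure M (\<Union>i. B (i + K))"
    using \<open>{K..} = range (\<lambda>i. i + K)\<close> by (simp add: image_image)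
  also have "\<dots> \<le> (\<Sum>i. measure M (B (i + K)))"
    using assms(1) by (intro finite_measure_subadditive_countably summable_measure) auto
  also have "\<dots> \<le> (\<Sum>i. D * exp (- a * (ln (real (i + K))) powr p))"
    by (intro suminf_le shift_bound summable_measure summable)
  also have "\<dots> = D * (\<Sum>i. exp (- a * (ln (real (i + K))) powr p))"
    using assms by (intro suminf_mult suminf_exp_neg_ln_powr_shift_le(1))
  also have "\<dots> \<le> D * ((\<Sum>k. exp (- (a / 2) * (ln (real k)) powr p)) * exp (- (a / 2) * (ln (real K)) powr p))"
    using assms by (intro mult_left_mono suminf_exp_neg_ln_powr_shift_le(2))
  finally show ?thesis
    by (simp add: mult.assoc)
qed

lemma R_hk_gt_subset_exceed_in_ball:
  fixes P :: "(int ^ 'd \<Rightarrow> bool) measure" and T :: "int ^ 'd \<Rightarrow> (int ^ 'd \<Rightarrow> bool) \<Rightarrow> ereal"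
  assumes good: "\<And>\<omega>. \<omega> \<in> space P - N \<Longrightarrow>
      \<forall>x \<in> S_inf \<omega>. \<forall>y \<in> S_inf \<omega>. \<forall>t. T x \<omega> \<le> ereal t \<and> l1dist x y powr (3/2) \<le> t \<longrightarrow>
        gauss_bound c1 c2 c3 c4 \<omega> t x y"
    and "0 \<le> kd2" "0 \<le> c6" "0 \<le> 1 + \<Delta>" "1 \<le> K"
  shows "{\<omega> \<in> space P. ereal (real K) < R_hk c1 c2 c3 c4 c6 kd2 \<Delta> \<omega>}
           \<subseteq> (\<Union>k \<in> {K..}. exceed_in_ball P T (2 * r_reg TYPE('d) kd2 c6 \<Delta> (real k + 1)) (real k)) \<union> N"
proof (rule subsetI, rule ccontr)
  fix \<omega>
  assume \<omega>: "\<omega> \<in> {\<omega> \<in> space P. ereal (real K) < R_hk c1 c2 c3 c4 c6 kd2 \<Delta> \<omega>}"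
    and not_covered: "\<omega> \<notin> (\<Union>k \<in> {K..}. exceed_in_ball P T (2 * r_reg TYPE('d) kd2 c6 \<Delta> (real k + 1)) (real k)) \<union> N"
  have "R_hk c1 c2 c3 c4 c6 kd2 \<Delta> \<omega> \<le> ereal (real K)"
  proof (rule R_hk_le_if_T_small)
    show "\<forall>x \<in> S_inf \<omega>. \<forall>y \<in> S_inf \<omega>. \<forall>t. T x \<omega> \<le> ereal t \<and> l1dist x y powr (3/2) \<le> t \<longrightarrow>
            gauss_bound c1 c2 c3 c4 \<omega> t x y"
      using \<omega> not_covered by (intro good) blast
    show "T x \<omega> < ereal (real k)"
      if "K \<le> k" "x \<in> supball0 (2 * r_reg TYPE('d) kd2 c6 \<Delta> (real k + 1))" for k x
    proof -
      have "\<omega> \<notin> exceed_in_ball P T (2 * r_reg TYPE('d) kd2 c6 \<Delta> (real k + 1)) (real k)"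
        using not_covered \<open>K \<le> k\<close> by blast
      then show ?thesis
        using \<omega> that(2) unfolding exceed_in_ball_def by (simp add: not_le)
    qed
  qed (use assms in simp_all)
  then show False
    using \<omega> by (simp add: leD)
qed

lemma outer_measure_R_hk_gt_le:
  fixes M :: "(int ^ 'd::finite \<Rightarrow> bool) measure" and T :: "int ^ 'd \<Rightarrow> (int ^ 'd \<Rightarrow> bool) \<Rightarrow> ereal"
  assumes "finite_measure M"
    and T_meas: "\<And>z. T z \<in> borel_measurable M"
    and gauss: "AE \<omega> in M. \<forall>x \<in> S_inf \<omega>. \<forall>y \<in> S_inf \<omega>. \<forall>t.
                  T x \<omega> \<le> ereal t \<and> l1dist x y powr (3/2) \<le> t \<longrightarrow> gauss_bound c1 c2 c3 c4 \<omega> t x y"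
    and bound: "\<And>k. K \<le> k \<Longrightarrow>
                  measure M (exceed_in_ball M T (2 * r_reg TYPE('d) kd2 c6 \<Delta> (real k + 1)) (real k))
                    \<le> D * exp (- a * (ln (real k)) powr (1 + \<Delta>))"
    and "0 \<le> kd2" "0 \<le> c6" "0 < \<Delta>" "1 \<le> K" "0 \<le> D" "0 < a"
  shows "outer_measure_le M {\<omega> \<in> space M. ereal (real K) < R_hk c1 c2 c3 c4 c6 kd2 \<Delta> \<omega>}
           (D * (\<Sum>k. exp (- (a / 2) * (ln (real k)) powr (1 + \<Delta>))) * exp (- (a / 2) * (ln (real K)) powr (1 + \<Delta>)))"
proof -
  interpret finite_measure M
    by fact
  define B where "B k = exceed_in_ball M T (2 * r_reg TYPE('d) kd2 c6 \<Delta> (real k + 1)) (real k)" for k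
  have sets_B: "B k \<in> sets M" for k
    unfolding B_def using T_meas by (rule sets_exceed_in_ball)
  obtain N where N: "N \<in> null_sets M" "\<And>\<omega>. \<omega> \<in> space M - N \<Longrightarrow>
      \<forall>x \<in> S_inf \<omega>. \<forall>y \<in> S_inf \<omega>. \<forall>t. T x \<omega> \<le> ereal t \<and> l1dist x y powr (3/2) \<le> t \<longrightarrow>
        gauss_bound c1 c2 c3 c4 \<omega> t x y"
    using AE_E3[OF gauss] by blast
  have "{\<omega> \<in> space M. ereal (real K) < R_hk c1 c2 c3 c4 c6 kd2 \<Delta> \<omega>} \<subseteq> (\<Union>k \<in> {K..}. B k) \<union> N"
    unfolding B_def using N assms by (intro R_hk_gt_subset_exceed_in_ball) auto
  moreover have "measure M ((\<Union>k \<in> {K..}. B k) \<union> N) = measure M (\<Union>k \<in> {K..}. B k)"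
    using N sets_B by (intro measure_Un_null_set) auto
  moreover have "measure M (\<Union>k \<in> {K..}. B k)
      \<le> D * (\<Sum>k. exp (- (a / 2) * (ln (real k)) powr (1 + \<Delta>))) * exp (- (a / 2) * (ln (real K)) powr (1 + \<Delta>))"
    unfolding B_def using assms sets_B[unfolded B_def] by (intro measure_UN_atLeast_le) auto
  moreover have "(\<Union>k \<in> {K..}. B k) \<union> N \<in> sets M"
    using N sets_B by auto
  ultimately show ?thesis
    unfolding outer_measure_le_def by auto
qed

lemma eventually_outer_measure_R_hk_ge_le:
  fixes M :: "(int ^ 'd::finite \<Rightarrow> bool) measure" and T :: "int ^ 'd \<Rightarrow> (int ^ 'd \<Rightarrow> bool) \<Rightarrow> ereal"
  assumes "prob_space M"
    and T_meas: "\<And>z. T z \<in> borel_measurable M"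
    and T_tail: "\<And>z r. 1 \<le> r \<Longrightarrow>
                   measure M {\<omega> \<in> space M. ereal r \<le> T z \<omega>} \<le> c5 * exp (- c6 * (ln r) powr (1 + \<Delta>))"
    and gauss: "AE \<omega> in M. \<forall>x \<in> S_inf \<omega>. \<forall>y \<in> S_inf \<omega>. \<forall>t.
                  T x \<omega> \<le> ereal t \<and> l1dist x y powr (3/2) \<le> t \<longrightarrow> gauss_bound c1 c2 c3 c4 \<omega> t x y"
    and "0 \<le> c5" "0 < c6" "0 < \<Delta>" "0 \<le> kd2"
  shows "\<exists>C > 0. eventually (\<lambda>n. outer_measure_le M {\<omega> \<in> space M. ereal (real n) \<le> R_hk c1 c2 c3 c4 c6 kd2 \<Delta> \<omega>}
           (C * exp (- (c6 / 12) * (ln (real n)) powr (1 + \<Delta>)))) sequentially"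
proof -
  interpret prob_space M
    by fact
  define D where "D = 5 ^ CARD('d) * c5"
  define L where "L k = (ln (real k)) powr (1 + \<Delta>)" for k
  define S where "S = (\<Sum>k. exp (- (c6 / 8) * L k))"
  have "summable (\<lambda>k. exp (- (c6 / 8) * L k))"
    unfolding L_def using assms by (intro summable_exp_neg_ln_powr) auto
  then have "0 \<le> S"
    unfolding S_def by (rule suminf_nonneg) simp
  have "eventually (\<lambda>k. measure M (exceed_in_ball M T (2 * r_reg TYPE('d) kd2 c6 \<Delta> (real k + 1)) (real k))
          \<le> D * exp (- (c6 / 4) * L k) \<and> (ln (real k + 1)) powr (1 + \<Delta>) \<le> 3 / 2 * L k) sequentially"
    unfolding D_def L_def using assms
    by (intro eventually_conj eventually_measure_exceed_in_ball_le eventually_ln_Suc_powr_le) auto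
  then obtain K0 where K0:
    "\<And>k. K0 \<le> k \<Longrightarrow> measure M (exceed_in_ball M T (2 * r_reg TYPE('d) kd2 c6 \<Delta> (real k + 1)) (real k))
            \<le> D * exp (- (c6 / 4) * L k)"
    "\<And>k. K0 \<le> k \<Longrightarrow> (ln (real k + 1)) powr (1 + \<Delta>) \<le> 3 / 2 * L k"
    unfolding eventually_sequentially by blast
  have "outer_measure_le M {\<omega> \<in> space M. ereal (real n) \<le> R_hk c1 c2 c3 c4 c6 kd2 \<Delta> \<omega>}
          ((D * S + 1) * exp (- (c6 / 12) * L n))" if "Suc (max K0 1) \<le> n" for n
  proof -
    \<comment> \<open>The good event at scale K only yields R_hk \<le> K, hence the shift by one.\<close>
    define K where "K = n - 1"
    have K: "K0 \<le> K" "1 \<le> K" "real n = real K + 1"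
      using that by (auto simp: K_def)
    have "outer_measure_le M {\<omega> \<in> space M. ereal (real K) < R_hk c1 c2 c3 c4 c6 kd2 \<Delta> \<omega>}
            (D * (\<Sum>k. exp (- (c6 / 4 / 2) * L k)) * exp (- (c6 / 4 / 2) * L K))"
      unfolding L_def using assms K K0(1)
      by (intro outer_measure_R_hk_gt_le) (auto simp: D_def L_def)
    moreover have "{\<omega> \<in> space M. ereal (real n) \<le> R_hk c1 c2 c3 c4 c6 kd2 \<Delta> \<omega>}
            \<subseteq> {\<omega> \<in> space M. ereal (real K) < R_hk c1 c2 c3 c4 c6 kd2 \<Delta> \<omega>}"
      using K by (auto elim: less_le_trans[rotated])
    moreover have "D * (\<Sum>k. exp (- (c6 / 4 / 2) * L k)) * exp (- (c6 / 4 / 2) * L K)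
                     \<le> (D * S + 1) * exp (- (c6 / 12) * L n)"
      using K0(2)[OF \<open>K0 \<le> K\<close>] K \<open>0 \<le> S\<close> \<open>0 \<le> c5\<close> \<open>0 < c6\<close>
      by (intro mult_mono) (auto simp: S_def D_def L_def)
    ultimately show ?thesis
      by (rule outer_measure_le_mono)
  qed
  moreover have "0 < D * S + 1"
    using \<open>0 \<le> S\<close> \<open>0 \<le> c5\<close> by (intro add_nonneg_pos mult_nonneg_nonneg) (auto simp: D_def)
  ultimately show ?thesis
    unfolding L_def eventually_sequentially by blast
qed

theorem lemma3p3:
  fixes P :: "(int ^ 'd \<Rightarrow> bool) measure"
    and T :: "int ^ 'd \<Rightarrow> (int ^ 'd \<Rightarrow> bool) \<Rightarrow> ereal"
    and c1 c2 c3 c4 c5 c6 \<Delta> \<alpha> :: real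
    and kd1 kd2 :: "real \<Rightarrow> real"
  assumes dim: "CARD('d) \<ge> 2"
    and prob: "prob_space P" and space: "space P = UNIV"
    and cpos: "0 < c1" "0 < c2" "0 < c3" "0 < c4" "0 < c5" "0 < c6"
    and Delta: "0 < \<Delta>"
    and alpha: "0 < \<alpha>" "\<alpha> < 1"
    and eta_pos: "measure P {\<omega> \<in> space P. 0 \<in> S_inf \<omega>} > 0"
    and voldev: "0 < kd1 \<alpha>" "0 < kd2 \<alpha>"
      "\<And>R::real. R \<ge> 1 \<Longrightarrow>
         measure P {\<omega> \<in> space P. 0 \<in> S_inf \<omega> \<and>
            (real (card (S_inf \<omega> \<inter> supball0 R)) / real (card (supball0 R :: (int ^ 'd) set))
               \<notin> {(1 - \<alpha>) * measure P {\<omega> \<in> space P. 0 \<in> S_inf \<omega>} ..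
                  (1 + \<alpha>) * measure P {\<omega> \<in> space P. 0 \<in> S_inf \<omega>}})}
         \<le> kd1 \<alpha> * exp (- kd2 \<alpha> * (ln R) powr (1 + \<Delta>)) * measure P {\<omega> \<in> space P. 0 \<in> S_inf \<omega>}"
    and T_meas: "\<And>z. T z \<in> borel_measurable P"
    and T_hk: "AE \<omega> in P. \<forall>x \<in> S_inf \<omega>. T x \<omega> < \<infinity> \<and>
                 (\<forall>y \<in> S_inf \<omega>. \<forall>t. ereal t \<ge> T x \<omega> \<and> t \<ge> l1dist x y powr (3/2) \<longrightarrow>
                    gauss_bound c1 c2 c3 c4 \<omega> t x y)"
    and T_tail: "\<And>z r. r \<ge> 1 \<Longrightarrow>
                 measure P {\<omega> \<in> space P. T z \<omega> \<ge> ereal r} \<le> c5 * exp (- c6 * (ln r) powr (1 + \<Delta>))"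
  shows "(\<exists>C c. 0 < C \<and> 0 < c \<and>
            (\<forall>n::nat. n \<ge> 1 \<longrightarrow>
               (\<exists>A \<in> sets P. {\<omega> \<in> space P. R_hk c1 c2 c3 c4 c6 (kd2 \<alpha>) \<Delta> \<omega> \<ge> ereal (real n)} \<subseteq> A \<and>
                  measure P A \<le> C * exp (- c * (ln (real n)) powr (1 + \<Delta>)))))
         \<and> (AE \<omega> in P. R_hk c1 c2 c3 c4 c6 (kd2 \<alpha>) \<Delta> \<omega> < \<infinity>)"
proof -
  interpret prob_space P
    by (rule prob)
  have gauss: "AE \<omega> in P. \<forall>x \<in> S_inf \<omega>. \<forall>y \<in> S_inf \<omega>. \<forall>t.
                 T x \<omega> \<le> ereal t \<and> l1dist x y powr (3/2) \<le> t \<longrightarrow> gauss_bound c1 c2 c3 c4 \<omega> t x y"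
    using T_hk by eventually_elim blast
  have "\<exists>C > 0. eventually (\<lambda>n. outer_measure_le P
          {\<omega> \<in> space P. ereal (real n) \<le> R_hk c1 c2 c3 c4 c6 (kd2 \<alpha>) \<Delta> \<omega>}
          (C * exp (- (c6 / 12) * (ln (real n)) powr (1 + \<Delta>)))) sequentially"
    by (rule eventually_outer_measure_R_hk_ge_le[OF prob T_meas _ gauss]) (use T_tail cpos Delta voldev(2) in auto)
  then obtain C where "0 < C" and eventually_tail:
    "eventually (\<lambda>n. outer_measure_le P {\<omega> \<in> space P. ereal (real n) \<le> R_hk c1 c2 c3 c4 c6 (kd2 \<alpha>) \<Delta> \<omega>}
       (C * exp (- (c6 / 12) * (ln (real n)) powr (1 + \<Delta>)))) sequentially"
    by blast
  have "\<exists>C' > 0. \<forall>n \<ge> 1. outer_measure_le P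
          {\<omega> \<in> space P. ereal (real n) \<le> R_hk c1 c2 c3 c4 c6 (kd2 \<alpha>) \<Delta> \<omega>}
          (C' * exp (- (c6 / 12) * (ln (real n)) powr (1 + \<Delta>)))"
    by (rule outer_measure_le_all_if_eventually[OF eventually_tail]) (use \<open>0 < C\<close> cpos Delta in auto)
  then obtain C' where "0 < C'" and tail: "\<And>n. 1 \<le> n \<Longrightarrow>
    outer_measure_le P {\<omega> \<in> space P. ereal (real n) \<le> R_hk c1 c2 c3 c4 c6 (kd2 \<alpha>) \<Delta> \<omega>}
      (C' * exp (- (c6 / 12) * (ln (real n)) powr (1 + \<Delta>)))"
    by blast
  have "(\<lambda>n. C' * exp (- (c6 / 12) * (ln (real n)) powr (1 + \<Delta>))) \<longlonglongrightarrow> 0"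
    using cpos Delta by (intro tendsto_mult_right_zero summable_LIMSEQ_zero summable_exp_neg_ln_powr) auto
  then have "AE \<omega> in P. R_hk c1 c2 c3 c4 c6 (kd2 \<alpha>) \<Delta> \<omega> < \<infinity>"
    using tail by (rule AE_less_infinity_if_outer_measure_tail[rotated])
  moreover have "0 < c6 / 12"
    using cpos by simp
  ultimately show ?thesis
    using \<open>0 < C'\<close> tail unfolding outer_measure_le_def by blast
qed

end
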